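(* Let $a,d\in\mathbb{N}$ and $m,n\in\mathbb{N}$ with $m,n\ge 2$. Let $X_1,\dots,X_m$ be i.i.d. random variables uniformly distributed on $\{1,\dots,a\}$ and $Y_1,\dots,Y_n$ i.i.d. random variables uniformly distributed on $\{1,\dots,d\}$, independent of the $X_i$. Let $X^{(1)}\ge X^{(2)}$ be the largest and second largest values among $X_1,\dots,X_m$ (counted with multiplicity), and similarly $Y^{(1)}\ge Y^{(2)}$ among $Y_1,\dots,Y_n$. Then \begin{align*} \Pr\left(X^{(1)}>Y^{(1)}\text{ and }X^{(2)}>Y^{(2)}\right) &= \sum_{y_1=2}^{\min \{a,d\} } \sum_{y_2=1}^{y_{1}-1} \frac{n\big(y_2^{n-1}-(y_2-1)^{n-1}\big)\big(a^m-y_1^m-m(a-y_1)y_2^{m-1}\big)}{a^m d^n} \\ & \quad + \sum_{y_{1}=1}^{\min\{a,d\}}\frac{\big( y_1^n-(y_1-1)^{n}-n(y_1-1)^{n-1} \big) \big(a^m+(m-1)y_1^m-am\,y_1^{m-1} \big)}{a^m d^n}. \end{align*}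
   Context: $X^{(i)}$ denotes the $i$-th largest of the dice values (order statistics, so if the two largest values are equal then $X^{(1)}=X^{(2)}$). In the paper's notation the event is $\{X_i\}_m>_{2,2}\{Y_j\}_n$: both of the comparisons $X^{(1)}>Y^{(1)}$, $X^{(2)}>Y^{(2)}$ hold (ties go to the defender). *)

theory Defs
  imports "HOL-Probability.Probability"
begin

definition ostat :: "nat \<Rightarrow> (nat \<Rightarrow> nat) \<Rightarrow> nat \<Rightarrow> nat" where
  "ostat k x i = rev (sort (map x [1..<k+1])) ! (i - 1)"

text \<open>Joint outcome space of (X_1..X_m, Y_1..Y_n); i.i.d. uniform dice, independent,
  is exactly the uniform distribution on this finite product set.\<close>
definition dice_space :: "nat \<Rightarrow> nat \<Rightarrow> nat \<Rightarrow> nat \<Rightarrow> ((nat \<Rightarrow> nat) \<times> (nat \<Rightarrow> nat)) set" where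
  "dice_space a m d n = ({1..m} \<rightarrow>\<^sub>E {1..a}) \<times> ({1..n} \<rightarrow>\<^sub>E {1..d})"

end

theory Submission
  imports Defs
begin

text \<open>The two largest of \<open>k\<close> dice are at most
  \<open>p\<close> and \<open>q \<le> p\<close> respectively exactly when every die shows at most \<open>p\<close> and at most one
  die exceeds \<open>q\<close>, which happens for \<open>q ^ k + k (p - q) q ^ (k - 1)\<close> rolls.
  Inclusion--exclusion turns this joint distribution function into the number of defender
  rolls with a given top pair \<open>(u, v)\<close> and into the number of attacker rolls beating it.
  Summing over \<open>(u, v)\<close> gives the formula; the second sum collects the ties \<open>u = v\<close>.\<close>

abbreviation rolls :: "nat \<Rightarrow> nat \<Rightarrow> (nat \<Rightarrow> nat) set" where
  "rolls k s \<equiv> {1..k} \<rightarrow>\<^sub>E {1..s}"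

lemma less_nth_iff_length_filter:
  fixes xs :: "'a::linorder list"
  assumes "sorted_wrt (\<ge>) xs" "k < length xs"
  shows "t < xs ! k \<longleftrightarrow> k < length (filter ((<) t) xs)"
  using assms
proof (induction xs arbitrary: k)
  case Nil
  then show ?case by simp
next
  case (Cons z xs)
  show ?case
  proof (cases "t < z")
    case True
    then show ?thesis using Cons by (cases k) auto
  next
    case False
    then have "filter ((<) t) (z # xs) = []" using Cons.prems(1) by (auto simp: filter_empty_conv)
    moreover have "(z # xs) ! k \<le> z" using Cons.prems by (cases k) auto
    ultimately show ?thesis using False by simp
  qed
qed

lemma ostat_gt_iff:
  assumes "1 \<le> j" "j \<le> k"
  shows "t < ostat k x j \<longleftrightarrow> j \<le> card {i \<in> {1..k}. t < x i}"
proof -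
  let ?xs = "rev (sort (map x [1..<k+1]))"
  have "sorted_wrt (\<ge>) ?xs"
    by (simp add: sorted_wrt_rev)
  then have "t < ostat k x j \<longleftrightarrow> j - 1 < length (filter ((<) t) ?xs)"
    unfolding ostat_def using assms by (simp add: less_nth_iff_length_filter)
  also have "length (filter ((<) t) ?xs) = length (filter ((<) t) (map x [1..<k+1]))"
    by (metis mset_filter mset_rev mset_sort size_mset)
  also have "\<dots> = length (filter (\<lambda>i. t < x i) [1..<k+1])"
    by (simp add: filter_map o_def)
  also have "\<dots> = card {i \<in> {1..k}. t < x i}"
    by (subst distinct_length_filter) (auto intro: arg_cong[where f = card])
  finally show ?thesis using assms by linarith
qed

lemma ostat_1_le_iff:
  assumes "1 \<le> k"
  shows "ostat k x 1 \<le> t \<longleftrightarrow> (\<forall>i \<in> {1..k}. x i \<le> t)"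
proof -
  have "ostat k x 1 \<le> t \<longleftrightarrow> card {i \<in> {1..k}. t < x i} = 0"
    using ostat_gt_iff[of 1 k t x] assms by linarith
  then show ?thesis by (auto simp: not_less)
qed

lemma ostat_2_le_iff:
  assumes "2 \<le> k"
  shows "ostat k x 2 \<le> t \<longleftrightarrow> \<not> (\<exists>i \<in> {1..k}. \<exists>j \<in> {1..k}. i \<noteq> j \<and> t < x i \<and> t < x j)"
proof -
  have "ostat k x 2 \<le> t \<longleftrightarrow> card {i \<in> {1..k}. t < x i} \<le> 1"
    using ostat_gt_iff[of 2 k t x] assms by linarith
  also have "\<dots> \<longleftrightarrow> (\<forall>i \<in> {i \<in> {1..k}. t < x i}. \<forall>j \<in> {i \<in> {1..k}. t < x i}. i = j)"
    by (simp add: card_le_Suc0_iff_eq)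
  finally show ?thesis by blast
qed

lemma ostat_2_le_ostat_1:
  assumes "2 \<le> k"
  shows "ostat k x 2 \<le> ostat k x 1"
  using ostat_gt_iff[of 2 k "ostat k x 1" x] ostat_gt_iff[of 1 k "ostat k x 1" x] assms by linarith

lemma ostat_1_le:
  assumes "1 \<le> k" "x \<in> rolls k s"
  shows "ostat k x 1 \<le> s"
  using assms ostat_1_le_iff[of k x s] by (auto simp: PiE_iff)

lemma one_le_ostat_2:
  assumes "2 \<le> k" "x \<in> rolls k s"
  shows "1 \<le> ostat k x 2"
proof -
  have "{i \<in> {1..k}. 0 < x i} = {1..k}"
    using assms(2) by (auto simp: PiE_iff)
  then show ?thesis
    using ostat_gt_iff[of 2 k 0 x] assms(1) by simp
qed

lemma PiE_at_most_one_above_eq: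
  fixes p q :: nat
  assumes "q \<le> p"
  shows "{x \<in> I \<rightarrow>\<^sub>E {1..p}. \<not> (\<exists>i \<in> I. \<exists>j \<in> I. i \<noteq> j \<and> q < x i \<and> q < x j)}
    = (I \<rightarrow>\<^sub>E {1..q}) \<union> (\<Union>i \<in> I. PiE I (\<lambda>j. if j = i then {q<..p} else {1..q}))"
    (is "?lhs = ?below \<union> (\<Union>i \<in> I. ?above_at i)")
proof (intro equalityI subsetI)
  fix x
  assume x: "x \<in> ?lhs"
  show "x \<in> ?below \<union> (\<Union>i \<in> I. ?above_at i)"
  proof (cases "\<forall>i \<in> I. x i \<le> q")
    case True
    then show ?thesis using x by (auto simp: PiE_iff)
  next
    case False
    then obtain i where i: "i \<in> I" "q < x i"
      by (auto simp: not_le)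
    have "x j \<le> q" if "j \<in> I" "j \<noteq> i" for j
    proof -
      have "\<not> (i \<noteq> j \<and> q < x i \<and> q < x j)"
        using x i(1) that(1) by blast
      then show ?thesis using i(2) that(2) by auto
    qed
    then have "x \<in> ?above_at i"
      using x i by (auto simp: PiE_iff)
    then show ?thesis using i by blast
  qed
next
  fix x
  assume "x \<in> ?below \<union> (\<Union>i \<in> I. ?above_at i)"
  then show "x \<in> ?lhs"
  proof
    assume "x \<in> ?below"
    then show ?thesis using assms by (auto simp: PiE_iff)
  next
    assume "x \<in> (\<Union>i \<in> I. ?above_at i)"
    then obtain i where "i \<in> I" and x: "x \<in> ?above_at i" by blast
    then have xi: "x i \<in> {q<..p}" and others: "\<And>j. j \<in> I \<Longrightarrow> j \<noteq> i \<Longrightarrow> x j \<in> {1..q}"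
      and "x \<in> extensional I"
      by (auto simp: PiE_iff)
    have "x j \<in> {1..p}" if "j \<in> I" for j
    proof (cases "j = i")
      case True
      then show ?thesis using xi by simp
    next
      case False
      then show ?thesis using others[OF that False] assms by simp
    qed
    then have "x \<in> I \<rightarrow>\<^sub>E {1..p}"
      using \<open>x \<in> extensional I\<close> by (simp add: PiE_iff)
    moreover have "\<not> q < x j" if "j \<in> I" "j \<noteq> i" for j
      using others[OF that] by simp
    ultimately show ?thesis by blast
  qed
qed

lemma card_PiE_at_most_one_above:
  assumes "finite I" "q \<le> p"
  shows "card {x \<in> I \<rightarrow>\<^sub>E {1..p}. \<not> (\<exists>i \<in> I. \<exists>j \<in> I. i \<noteq> j \<and> q < x i \<and> q < x j)}
    = q ^ card I + card I * (p - q) * q ^ (card I - 1)"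
proof -
  define below where "below = I \<rightarrow>\<^sub>E {1..q}"
  define above_at where "above_at i = PiE I (\<lambda>j. if j = i then {q<..p} else {1..q})" for i
  have disjoint_below: "below \<inter> above_at i = {}" if "i \<in> I" for i
  proof -
    have "x i \<in> {1..q}" "x i \<in> {q<..p}" if "x \<in> below" "x \<in> above_at i" for x
      using that \<open>i \<in> I\<close> by (auto simp: below_def above_at_def PiE_iff)
    then show ?thesis by fastforce
  qed
  have disjoint_above: "above_at i \<inter> above_at j = {}" if "i \<in> I" "j \<in> I" "i \<noteq> j" for i j
  proof -
    have "x j \<in> {1..q}" "x j \<in> {q<..p}" if "x \<in> above_at i" "x \<in> above_at j" for x
      using that \<open>i \<noteq> j\<close> \<open>j \<in> I\<close> by (auto simp: above_at_def PiE_iff)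
    then show ?thesis by fastforce
  qed
  have finite_above_at: "finite (above_at i)" for i
    using assms(1) by (simp add: above_at_def finite_PiE)
  have card_above_at: "card (above_at i) = (p - q) * q ^ (card I - 1)" if "i \<in> I" for i
  proof -
    have "card (above_at i) = (\<Prod>j \<in> I. card (if j = i then {q<..p} else {1..q}))"
      using assms(1) by (simp add: above_at_def card_PiE)
    also have "\<dots> = card {q<..p} * (\<Prod>j \<in> I - {i}. card (if j = i then {q<..p} else {1..q}))"
      using that assms(1) by (simp add: prod.remove[of I i])
    also have "(\<Prod>j \<in> I - {i}. card (if j = i then {q<..p} else {1..q})) = (\<Prod>j \<in> I - {i}. q)"
      by (rule prod.cong) auto
    finally show ?thesis
      using that assms(1) by (simp add: card_Diff_singleton)
  qed
  have "card (below \<union> (\<Union>i \<in> I. above_at i)) = card below + (\<Sum>i \<in> I. card (above_at i))"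
    using assms(1) disjoint_below disjoint_above finite_above_at
    by (simp add: card_Un_disjoint card_UN_disjoint below_def finite_PiE Int_UN_distrib)
  then show ?thesis
    unfolding PiE_at_most_one_above_eq[OF assms(2)] below_def[symmetric] above_at_def[symmetric]
    using assms(1) card_above_at by (simp add: below_def card_PiE)
qed

lemma card_ostat_le:
  assumes "2 \<le> k" "q \<le> p" "p \<le> s"
  shows "real (card {x \<in> rolls k s. ostat k x 1 \<le> p \<and> ostat k x 2 \<le> q})
    = real q ^ k + real k * (real p - real q) * real q ^ (k - 1)"
proof -
  have "{x \<in> rolls k s. ostat k x 1 \<le> p \<and> ostat k x 2 \<le> q}
      = {x \<in> rolls k p. \<not> (\<exists>i \<in> {1..k}. \<exists>j \<in> {1..k}. i \<noteq> j \<and> q < x i \<and> q < x j)}"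
    using assms ostat_1_le_iff[of k] ostat_2_le_iff[of k] by (auto simp: PiE_iff)
  then show ?thesis
    using card_PiE_at_most_one_above[of "{1..k}" q p] assms(2) by (simp add: of_nat_diff)
qed

lemma ostat_1_gt_empty:
  assumes "1 \<le> k" "s \<le> u"
  shows "{x \<in> rolls k s. u < ostat k x 1 \<and> P x} = {}"
proof -
  have "\<not> u < ostat k x 1" if "x \<in> rolls k s" for x
    using ostat_1_le[OF assms(1) that] assms(2) by linarith
  then show ?thesis
    by blast
qed

lemma card_ostat_gt:
  assumes "2 \<le> k" "v \<le> u" "u \<le> s"
  shows "real (card {x \<in> rolls k s. u < ostat k x 1 \<and> v < ostat k x 2})
    = real s ^ k - real u ^ k - real k * (real s - real u) * real v ^ (k - 1)"
proof -
  define A where "A = {x \<in> rolls k s. ostat k x 1 \<le> u \<and> ostat k x 2 \<le> u}"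
  define B where "B = {x \<in> rolls k s. ostat k x 1 \<le> s \<and> ostat k x 2 \<le> v}"
  have finite_rolls: "finite (rolls k s)"
    by (simp add: finite_PiE)
  have subset: "A \<union> B \<subseteq> rolls k s"
    by (auto simp: A_def B_def)
  have complement: "{x \<in> rolls k s. u < ostat k x 1 \<and> v < ostat k x 2} = rolls k s - (A \<union> B)"
    using ostat_2_le_ostat_1[OF assms(1)] ostat_1_le[of k _ s] assms(1)
    by (auto simp: A_def B_def not_less) (meson le_trans)
  have inter: "A \<inter> B = {x \<in> rolls k s. ostat k x 1 \<le> u \<and> ostat k x 2 \<le> v}"
    using assms(2,3) by (auto simp: A_def B_def)
  have "real (card (rolls k s - (A \<union> B))) = real (card (rolls k s)) - real (card (A \<union> B))"
    using card_Diff_subset[OF finite_subset[OF subset finite_rolls] subset] card_mono[OF finite_rolls subset]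
    by (simp add: of_nat_diff)
  moreover have "card A + card B = card (A \<union> B) + card (A \<inter> B)"
    using subset finite_rolls by (intro card_Un_Int) (auto intro: finite_subset)
  then have "real (card A) + real (card B) = real (card (A \<union> B)) + real (card (A \<inter> B))"
    by (metis of_nat_add)
  ultimately have "real (card {x \<in> rolls k s. u < ostat k x 1 \<and> v < ostat k x 2})
      = real (card (rolls k s)) - real (card A) - real (card B) + real (card (A \<inter> B))"
    unfolding complement by linarith
  also have "\<dots> = real s ^ k - real u ^ k - real k * (real s - real u) * real v ^ (k - 1)"
    using assms(2,3) le_trans[OF assms(2,3)]
    unfolding inter unfolding A_def B_def card_ostat_le[OF assms(1) order.refl assms(3)]
      card_ostat_le[OF assms(1) assms(2,3)] card_ostat_le[OF assms(1) le_trans[OF assms(2,3)] order.refl]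
    by (simp add: card_PiE algebra_simps)
  finally show ?thesis .
qed

lemma card_eq_pair_incl_excl:
  fixes f g :: "'a \<Rightarrow> nat"
  assumes "finite A" "1 \<le> u" "1 \<le> v"
  shows "real (card {y \<in> A. f y = u \<and> g y = v})
    = real (card {y \<in> A. f y \<le> u \<and> g y \<le> v}) - real (card {y \<in> A. f y \<le> u - 1 \<and> g y \<le> v})
      - real (card {y \<in> A. f y \<le> u \<and> g y \<le> v - 1})
      + real (card {y \<in> A. f y \<le> u - 1 \<and> g y \<le> v - 1})"
proof -
  define S where "S p q = {y \<in> A. f y \<le> p \<and> g y \<le> q}" for p q
  define U where "U = S (u - 1) v \<union> S u (v - 1)"
  have finite_S: "finite (S p q)" for p q
    using assms(1) by (simp add: S_def)
  have point: "{y \<in> A. f y = u \<and> g y = v} = S u v - U"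
    using assms(2,3) by (auto simp: S_def U_def)
  have subset: "U \<subseteq> S u v"
    by (auto simp: S_def U_def)
  have "real (card (S u v - U)) = real (card (S u v)) - real (card U)"
    using card_Diff_subset[OF finite_subset[OF subset finite_S] subset] card_mono[OF finite_S subset]
    by (simp add: of_nat_diff)
  moreover have "S (u - 1) v \<inter> S u (v - 1) = S (u - 1) (v - 1)"
    by (auto simp: S_def)
  then have "card U + card (S (u - 1) (v - 1)) = card (S (u - 1) v) + card (S u (v - 1))"
    unfolding U_def by (metis card_Un_Int finite_S)
  then have "real (card U) + real (card (S (u - 1) (v - 1))) = real (card (S (u - 1) v)) + real (card (S u (v - 1)))"
    by (metis of_nat_add)
  ultimately have "real (card {y \<in> A. f y = u \<and> g y = v})
      = real (card (S u v)) - real (card (S (u - 1) v)) - real (card (S u (v - 1))) + real (card (S (u - 1) (v - 1)))"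
    unfolding point by linarith
  then show ?thesis
    by (simp only: S_def)
qed

lemma card_ostat_eq:
  assumes "2 \<le> k" "1 \<le> v" "v < u" "u \<le> s"
  shows "real (card {y \<in> rolls k s. ostat k y 1 = u \<and> ostat k y 2 = v})
    = real k * (real v ^ (k - 1) - (real v - 1) ^ (k - 1))"
proof -
  have "v \<le> u" "u - 1 \<le> s" "v \<le> u - 1" "v - 1 \<le> u" "v - 1 \<le> u - 1"
    and minus_one: "real (u - 1) = real u - 1" "real (v - 1) = real v - 1"
    using assms by (simp_all add: of_nat_diff)
  then show ?thesis
    using card_eq_pair_incl_excl[of "rolls k s" u v "\<lambda>y. ostat k y 1" "\<lambda>y. ostat k y 2"] assms(2,3)
    unfolding card_ostat_le[OF assms(1) \<open>v \<le> u\<close> assms(4)]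
      card_ostat_le[OF assms(1) \<open>v \<le> u - 1\<close> \<open>u - 1 \<le> s\<close>]
      card_ostat_le[OF assms(1) \<open>v - 1 \<le> u\<close> assms(4)]
      card_ostat_le[OF assms(1) \<open>v - 1 \<le> u - 1\<close> \<open>u - 1 \<le> s\<close>]
    by (simp add: finite_PiE minus_one algebra_simps)
qed

lemma card_ostat_eq_diag:
  assumes "2 \<le> k" "1 \<le> u" "u \<le> s"
  shows "real (card {y \<in> rolls k s. ostat k y 1 = u \<and> ostat k y 2 = u})
    = real u ^ k - (real u - 1) ^ k - real k * (real u - 1) ^ (k - 1)"
proof -
  have second_below_first: "{y \<in> rolls k s. ostat k y 1 \<le> u - 1 \<and> ostat k y 2 \<le> u}
      = {y \<in> rolls k s. ostat k y 1 \<le> u - 1 \<and> ostat k y 2 \<le> u - 1}"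
    using ostat_2_le_ostat_1[OF assms(1)] by (auto intro: le_trans)
  moreover have "u - 1 \<le> u" "u - 1 \<le> s" and minus_one: "real (u - 1) = real u - 1"
    using assms by (simp_all add: of_nat_diff)
  ultimately show ?thesis
    using card_eq_pair_incl_excl[of "rolls k s" u u "\<lambda>y. ostat k y 1" "\<lambda>y. ostat k y 2"] assms(2)
    unfolding second_below_first card_ostat_le[OF assms(1) order.refl assms(3)]
      card_ostat_le[OF assms(1) order.refl \<open>u - 1 \<le> s\<close>]
      card_ostat_le[OF assms(1) \<open>u - 1 \<le> u\<close> assms(3)]
    by (simp add: finite_PiE minus_one algebra_simps)
qed

lemma sum_comp_eq_sum_card_fibres:
  fixes f :: "'b \<Rightarrow> 'c::comm_semiring_1"
  assumes "finite A" "finite T" "g ` A \<subseteq> T"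
  shows "(\<Sum>y \<in> A. f (g y)) = (\<Sum>t \<in> T. of_nat (card {y \<in> A. g y = t}) * f t)"
proof -
  have "(\<Sum>y \<in> A. f (g y)) = (\<Sum>t \<in> T. \<Sum>y \<in> {y \<in> A. g y = t}. f (g y))"
    using sum.group[OF assms, of "\<lambda>y. f (g y)"] by simp
  also have "\<dots> = (\<Sum>t \<in> T. \<Sum>y \<in> {y \<in> A. g y = t}. f t)"
    by (intro sum.cong) auto
  finally show ?thesis
    by simp
qed

lemma card_product_filter:
  assumes "finite A" "finite B"
  shows "card {(x, y) \<in> A \<times> B. R x y} = (\<Sum>y \<in> B. card {x \<in> A. R x y})"
proof -
  have "{(x, y) \<in> A \<times> B. R x y} = (\<lambda>(y, x). (x, y)) ` (SIGMA y:B. {x \<in> A. R x y})"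
    by auto
  moreover have "inj_on (\<lambda>(y, x). (x, y)) (SIGMA y:B. {x \<in> A. R x y})"
    by (auto simp: inj_on_def)
  ultimately show ?thesis
    using assms by (simp add: card_image)
qed

text \<open>Only a defender maximum \<open>u \<le> a\<close> can be beaten, whence the range \<open>min a d\<close>.\<close>

lemma card_top_two_beaten_eq_sum:
  assumes "2 \<le> m" "2 \<le> n"
  shows "real (card {(x, y) \<in> rolls m a \<times> rolls n d. ostat n y 1 < ostat m x 1 \<and> ostat n y 2 < ostat m x 2})
    = (\<Sum>u = 1..min a d. \<Sum>v = 1..u. real (card {y \<in> rolls n d. ostat n y 1 = u \<and> ostat n y 2 = v})
        * real (card {x \<in> rolls m a. u < ostat m x 1 \<and> v < ostat m x 2}))"
proof -
  define beaten where "beaten uv = real (card {x \<in> rolls m a. fst uv < ostat m x 1 \<and> snd uv < ostat m x 2})"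
    for uv
  have "1 \<le> ostat n y 2 \<and> ostat n y 2 \<le> ostat n y 1 \<and> ostat n y 1 \<le> d" if "y \<in> rolls n d" for y
    using assms(2) that ostat_1_le[of n y d] one_le_ostat_2[of n y] ostat_2_le_ostat_1[of n y] by simp
  then have range: "(\<lambda>y. (ostat n y 1, ostat n y 2)) ` rolls n d \<subseteq> (SIGMA u:{1..d}. {1..u})"
    by force
  have "real (card {(x, y) \<in> rolls m a \<times> rolls n d. ostat n y 1 < ostat m x 1 \<and> ostat n y 2 < ostat m x 2})
      = (\<Sum>y \<in> rolls n d. beaten (ostat n y 1, ostat n y 2))"
    unfolding beaten_def of_nat_sum[symmetric] fst_conv snd_conv
    by (intro arg_cong[where f = real] card_product_filter finite_PiE) auto
  also have "\<dots> = (\<Sum>(u, v) \<in> (SIGMA u:{1..d}. {1..u}).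
      real (card {y \<in> rolls n d. ostat n y 1 = u \<and> ostat n y 2 = v}) * beaten (u, v))"
    by (subst sum_comp_eq_sum_card_fibres[OF _ _ range]) (auto simp: finite_PiE intro!: sum.cong)
  also have "\<dots> = (\<Sum>u = 1..d. \<Sum>v = 1..u. real (card {y \<in> rolls n d. ostat n y 1 = u \<and> ostat n y 2 = v})
      * beaten (u, v))"
    by (rule sum.Sigma[symmetric]) auto
  also have "\<dots> = (\<Sum>u = 1..min a d. \<Sum>v = 1..u. real (card {y \<in> rolls n d. ostat n y 1 = u \<and> ostat n y 2 = v})
      * beaten (u, v))"
  proof (rule sum.mono_neutral_right)
    have "1 \<le> m"
      using assms(1) by simp
    then have "beaten (u, v) = 0" if "a < u" for u v
      unfolding beaten_def fst_conv snd_conv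
        ostat_1_gt_empty[OF \<open>1 \<le> m\<close> less_imp_le[OF that], of "\<lambda>x. v < ostat m x 2"]
      by simp
    then show "\<forall>u \<in> {1..d} - {1..min a d}. (\<Sum>v = 1..u. real (card {y \<in> rolls n d. ostat n y 1 = u \<and> ostat n y 2 = v})
        * beaten (u, v)) = 0"
      by auto
  qed auto
  finally show ?thesis
    by (simp add: beaten_def)
qed

lemma card_top_two_beaten:
  assumes "2 \<le> m" "2 \<le> n"
  shows "real (card {(x, y) \<in> rolls m a \<times> rolls n d. ostat n y 1 < ostat m x 1 \<and> ostat n y 2 < ostat m x 2})
    = (\<Sum>y1 = 2..min a d. \<Sum>y2 = 1..y1 - 1.
          real n * (real y2 ^ (n - 1) - (real y2 - 1) ^ (n - 1))
          * (real a ^ m - real y1 ^ m - real m * (real a - real y1) * real y2 ^ (m - 1)))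
      + (\<Sum>y1 = 1..min a d.
          (real y1 ^ n - (real y1 - 1) ^ n - real n * (real y1 - 1) ^ (n - 1))
          * (real a ^ m + (real m - 1) * real y1 ^ m - real a * real m * real y1 ^ (m - 1)))"
    (is "_ = (\<Sum>y1 = 2..min a d. \<Sum>y2 = 1..y1 - 1. ?below y1 y2) + (\<Sum>y1 = 1..min a d. ?tie y1)")
proof -
  define weight where "weight u v = real (card {y \<in> rolls n d. ostat n y 1 = u \<and> ostat n y 2 = v})
    * real (card {x \<in> rolls m a. u < ostat m x 1 \<and> v < ostat m x 2})" for u v
  have column: "(\<Sum>v = 1..u. weight u v) = (\<Sum>v = 1..u - 1. ?below u v) + ?tie u"
    if "u \<in> {1..min a d}" for u
  proof -
    have u: "1 \<le> u" "u \<le> a" "u \<le> d"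
      using that by auto
    have "(\<Sum>v = 1..u. weight u v) = (\<Sum>v = 1..u - 1. weight u v) + weight u u"
      using u by (cases u) (auto simp: sum.cl_ivl_Suc)
    also have "(\<Sum>v = 1..u - 1. weight u v) = (\<Sum>v = 1..u - 1. ?below u v)"
    proof (rule sum.cong[OF refl])
      fix v
      assume "v \<in> {1..u - 1}"
      then have v: "1 \<le> v" "v < u" "v \<le> u"
        by auto
      show "weight u v = ?below u v"
        unfolding weight_def card_ostat_eq[OF assms(2) v(1,2) u(3)] card_ostat_gt[OF assms(1) v(3) u(2)] ..
    qed
    also have "weight u u = ?tie u"
    proof -
      have "real u ^ m = real u * real u ^ (m - 1)"
        using assms(1) by (simp add: power_eq_if)
      then show ?thesis
        unfolding weight_def card_ostat_eq_diag[OF assms(2) u(1,3)] card_ostat_gt[OF assms(1) order.refl u(2)]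
        by (simp add: algebra_simps)
    qed
    finally show ?thesis .
  qed
  have "(\<Sum>y1 = 1..min a d. \<Sum>y2 = 1..y1 - 1. ?below y1 y2) = (\<Sum>y1 = 2..min a d. \<Sum>y2 = 1..y1 - 1. ?below y1 y2)"
    by (rule sum.mono_neutral_right) auto
  then show ?thesis
    using card_top_two_beaten_eq_sum[OF assms] column by (simp add: weight_def sum.distrib)
qed

theorem proposition6p3:
  fixes a d m n :: nat
  assumes "a \<ge> 1" and "d \<ge> 1" and "m \<ge> 2" and "n \<ge> 2"
  shows "measure_pmf.prob (pmf_of_set (dice_space a m d n))
      {(x, y). ostat m x 1 > ostat n y 1 \<and> ostat m x 2 > ostat n y 2}
    = (\<Sum>y1 = 2..min a d. \<Sum>y2 = 1..y1 - 1.
          real n * (real y2 ^ (n - 1) - (real y2 - 1) ^ (n - 1))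
          * (real a ^ m - real y1 ^ m - real m * (real a - real y1) * real y2 ^ (m - 1))
          / (real a ^ m * real d ^ n))
    + (\<Sum>y1 = 1..min a d.
          (real y1 ^ n - (real y1 - 1) ^ n - real n * (real y1 - 1) ^ (n - 1))
          * (real a ^ m + (real m - 1) * real y1 ^ m - real a * real m * real y1 ^ (m - 1))
          / (real a ^ m * real d ^ n))"
proof -
  let ?event = "{(x, y). ostat m x 1 > ostat n y 1 \<and> ostat m x 2 > ostat n y 2}"
  have "dice_space a m d n \<noteq> {}"
    using assms(1,2) by (simp add: dice_space_def PiE_eq_empty_iff)
  then have probability: "measure_pmf.prob (pmf_of_set (dice_space a m d n)) ?event
      = real (card (dice_space a m d n \<inter> ?event)) / real (card (dice_space a m d n))"
    by (intro measure_pmf_of_set) (simp_all add: dice_space_def finite_PiE)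
  have event: "dice_space a m d n \<inter> ?event
      = {(x, y) \<in> rolls m a \<times> rolls n d. ostat n y 1 < ostat m x 1 \<and> ostat n y 2 < ostat m x 2}"
    by (auto simp: dice_space_def)
  have space: "real (card (dice_space a m d n)) = real a ^ m * real d ^ n"
    by (simp add: dice_space_def card_cartesian_product card_PiE)
  show ?thesis
    unfolding probability event space card_top_two_beaten[OF assms(3,4)]
    by (simp add: add_divide_distrib sum_divide_distrib)
qed

end
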